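(* Let $S,T,V$ be ordered trees and let $i\colon S\to T$ and $j\colon T\to V$ be embeddings. Let $x$ be a leaf of $S$, $y$ a leaf of $T$ and $z$ a leaf of $V$. If $y$ is $i$-conjugate to $x$ and $z$ is $j$-conjugate to $y$, then $z$ is $(j\circ i)$-conjugate to $x$.
   Context: A tree is a finite, non-empty poset $(T,\sqsubseteq_T)$ with a smallest element (root) in which the predecessors of each element form a chain (each element is its own predecessor); $v\wedge_T w$ is the largest common predecessor. An ordered tree has a fixed linear order on the immediate successors of each node, inducing the lexicographic linear order $\leq_T$: $v\leq_T w$ if $v\sqsubseteq_T w$, and for incomparable $v,w$, $v\leq_T w$ iff the immediate successor of $v\wedge_T w$ below $v$ precedes the one below $w$. A morphism preserves $\wedge$, is $\leq$-monotone and maps root to root; an embedding is an injective morphism. A leaf is a $\sqsubseteq$-maximal node. For an embedding $i\colon S\to T$, a leaf $y$ of $T$ is $i$-conjugate to a leaf $x$ of $S$ if: (i) when $x$ is the $\leq_S$-largest leaf of $S$, $y$ is the $\leq_T$-largest leaf of $T$; (ii) otherwise, letting $x'$ be the $\leq_S$-smallest leaf of $S$ with $x<_S x'$, $y$ is the $\leq_T$-largest leaf of $T$ such that $y<_T i(x')$ and $i(x)\wedge_T i(x')=y\wedge_T i(x')$. *)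

theory Defs
  imports Main
begin

text \<open>An ordered tree is given by a carrier set A, the tree order P (v \<sqsubseteq> w written P v w)
and a sibling order R, which linearly orders the immediate successors of each node.\<close>

definition is_tree :: "'a set \<Rightarrow> ('a \<Rightarrow> 'a \<Rightarrow> bool) \<Rightarrow> bool" where
  "is_tree A P \<longleftrightarrow> finite A \<and> A \<noteq> {}
     \<and> (\<forall>v\<in>A. P v v)
     \<and> (\<forall>v\<in>A. \<forall>w\<in>A. P v w \<and> P w v \<longrightarrow> v = w)
     \<and> (\<forall>u\<in>A. \<forall>v\<in>A. \<forall>w\<in>A. P u v \<and> P v w \<longrightarrow> P u w)
     \<and> (\<exists>r\<in>A. \<forall>v\<in>A. P r v)
     \<and> (\<forall>v\<in>A. \<forall>u\<in>A. \<forall>u'\<in>A. P u v \<and> P u' v \<longrightarrow> P u u' \<or> P u' u)"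

definition tree_root :: "'a set \<Rightarrow> ('a \<Rightarrow> 'a \<Rightarrow> bool) \<Rightarrow> 'a" where
  "tree_root A P = (THE r. r \<in> A \<and> (\<forall>v\<in>A. P r v))"

definition tree_meet :: "'a set \<Rightarrow> ('a \<Rightarrow> 'a \<Rightarrow> bool) \<Rightarrow> 'a \<Rightarrow> 'a \<Rightarrow> 'a" where
  "tree_meet A P v w = (THE m. m \<in> A \<and> P m v \<and> P m w \<and> (\<forall>u\<in>A. P u v \<and> P u w \<longrightarrow> P u m))"

definition tree_children :: "'a set \<Rightarrow> ('a \<Rightarrow> 'a \<Rightarrow> bool) \<Rightarrow> 'a \<Rightarrow> 'a set" where
  "tree_children A P m = {u\<in>A. P m u \<and> u \<noteq> m \<and> (\<forall>x\<in>A. P m x \<and> P x u \<longrightarrow> x = m \<or> x = u)}"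

definition is_ordered_tree :: "'a set \<Rightarrow> ('a \<Rightarrow> 'a \<Rightarrow> bool) \<Rightarrow> ('a \<Rightarrow> 'a \<Rightarrow> bool) \<Rightarrow> bool" where
  "is_ordered_tree A P R \<longleftrightarrow> is_tree A P
     \<and> (\<forall>u v. R u v \<longrightarrow> (\<exists>m\<in>A. u \<in> tree_children A P m \<and> v \<in> tree_children A P m))
     \<and> (\<forall>m\<in>A. let C = tree_children A P m in
          (\<forall>u\<in>C. R u u) \<and> (\<forall>u\<in>C. \<forall>v\<in>C. R u v \<and> R v u \<longrightarrow> u = v)
          \<and> (\<forall>u\<in>C. \<forall>v\<in>C. \<forall>w\<in>C. R u v \<and> R v w \<longrightarrow> R u w)
          \<and> (\<forall>u\<in>C. \<forall>v\<in>C. R u v \<or> R v u))"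

definition child_toward :: "'a set \<Rightarrow> ('a \<Rightarrow> 'a \<Rightarrow> bool) \<Rightarrow> 'a \<Rightarrow> 'a \<Rightarrow> 'a" where
  "child_toward A P m v = (THE u. u \<in> tree_children A P m \<and> P u v)"

definition lex_le :: "'a set \<Rightarrow> ('a \<Rightarrow> 'a \<Rightarrow> bool) \<Rightarrow> ('a \<Rightarrow> 'a \<Rightarrow> bool) \<Rightarrow> 'a \<Rightarrow> 'a \<Rightarrow> bool" where
  "lex_le A P R v w \<longleftrightarrow> P v w \<or>
     (\<not> P v w \<and> \<not> P w v \<and>
      R (child_toward A P (tree_meet A P v w) v) (child_toward A P (tree_meet A P v w) w))"

definition lex_less :: "'a set \<Rightarrow> ('a \<Rightarrow> 'a \<Rightarrow> bool) \<Rightarrow> ('a \<Rightarrow> 'a \<Rightarrow> bool) \<Rightarrow> 'a \<Rightarrow> 'a \<Rightarrow> bool" where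
  "lex_less A P R v w \<longleftrightarrow> lex_le A P R v w \<and> v \<noteq> w"

definition otree_morphism ::
  "'a set \<Rightarrow> ('a \<Rightarrow> 'a \<Rightarrow> bool) \<Rightarrow> ('a \<Rightarrow> 'a \<Rightarrow> bool) \<Rightarrow>
   'b set \<Rightarrow> ('b \<Rightarrow> 'b \<Rightarrow> bool) \<Rightarrow> ('b \<Rightarrow> 'b \<Rightarrow> bool) \<Rightarrow> ('a \<Rightarrow> 'b) \<Rightarrow> bool" where
  "otree_morphism A P R B Q R' f \<longleftrightarrow>
     f ` A \<subseteq> B
     \<and> (\<forall>v\<in>A. \<forall>w\<in>A. f (tree_meet A P v w) = tree_meet B Q (f v) (f w))
     \<and> (\<forall>v\<in>A. \<forall>w\<in>A. lex_le A P R v w \<longrightarrow> lex_le B Q R' (f v) (f w))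
     \<and> f (tree_root A P) = tree_root B Q"

definition otree_embedding ::
  "'a set \<Rightarrow> ('a \<Rightarrow> 'a \<Rightarrow> bool) \<Rightarrow> ('a \<Rightarrow> 'a \<Rightarrow> bool) \<Rightarrow>
   'b set \<Rightarrow> ('b \<Rightarrow> 'b \<Rightarrow> bool) \<Rightarrow> ('b \<Rightarrow> 'b \<Rightarrow> bool) \<Rightarrow> ('a \<Rightarrow> 'b) \<Rightarrow> bool" where
  "otree_embedding A P R B Q R' f \<longleftrightarrow> otree_morphism A P R B Q R' f \<and> inj_on f A"

definition is_leaf :: "'a set \<Rightarrow> ('a \<Rightarrow> 'a \<Rightarrow> bool) \<Rightarrow> 'a \<Rightarrow> bool" where
  "is_leaf A P v \<longleftrightarrow> v \<in> A \<and> (\<forall>w\<in>A. P v w \<longrightarrow> w = v)"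

definition conjugate ::
  "'a set \<Rightarrow> ('a \<Rightarrow> 'a \<Rightarrow> bool) \<Rightarrow> ('a \<Rightarrow> 'a \<Rightarrow> bool) \<Rightarrow>
   'b set \<Rightarrow> ('b \<Rightarrow> 'b \<Rightarrow> bool) \<Rightarrow> ('b \<Rightarrow> 'b \<Rightarrow> bool) \<Rightarrow> ('a \<Rightarrow> 'b) \<Rightarrow> 'a \<Rightarrow> 'b \<Rightarrow> bool" where
  "conjugate A P R B Q R' i x y \<longleftrightarrow>
     (if (\<forall>x'. is_leaf A P x' \<longrightarrow> lex_le A P R x' x) then
        is_leaf B Q y \<and> (\<forall>y'. is_leaf B Q y' \<longrightarrow> lex_le B Q R' y' y)
      else
        (let x' = (THE x'. is_leaf A P x' \<and> lex_less A P R x x' \<and>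
                     (\<forall>x''. is_leaf A P x'' \<and> lex_less A P R x x'' \<longrightarrow> lex_le A P R x' x''));
             good = (\<lambda>y. is_leaf B Q y \<and> lex_less B Q R' y (i x') \<and>
                     tree_meet B Q (i x) (i x') = tree_meet B Q y (i x'))
         in good y \<and> (\<forall>y'. good y' \<longrightarrow> lex_le B Q R' y' y)))"

end

theory Submission
  imports Defs
begin

text \<open>
  Outside the trivial case where x is the last leaf, let x' be the leaf following x,
  m = i x \<and> i x' and c the child of m towards i x'. Then y is the last leaf of T that
  branches off the path to i x' at m on the left of c, so the leaf y'' following y is the
  first leaf below c: y \<and> y'' = m, and y'' and i x' pass through the same child of m.
  As j preserves meets and the tree order, in V the leaves branching off at j m to the left
  of j y'' are exactly those branching off at j m to the left of j (i x'). Hence the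
  conditions defining "z is j-conjugate to y" and "z is (j \<circ> i)-conjugate to x" coincide.
\<close>

lemma finite_has_maximal_wrt:
  assumes "finite X" "X \<noteq> {}"
    and antisym: "\<And>a b. a \<in> X \<Longrightarrow> b \<in> X \<Longrightarrow> Q a b \<Longrightarrow> Q b a \<Longrightarrow> a = b"
    and trans: "\<And>a b c. a \<in> X \<Longrightarrow> b \<in> X \<Longrightarrow> c \<in> X \<Longrightarrow> Q a b \<Longrightarrow> Q b c \<Longrightarrow> Q a c"
  shows "\<exists>m\<in>X. \<forall>a\<in>X. Q m a \<longrightarrow> a = m"
  using assms(1,2) antisym trans
proof (induction X rule: finite_ne_induct)
  case (singleton x)
  then show ?case by blast
next
  case (insert x F)
  obtain m where m: "m \<in> F" "\<forall>a\<in>F. Q m a \<longrightarrow> a = m"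
    using insert.IH insert.prems by blast
  show ?case
  proof (cases "Q m x")
    case True
    have "a = x" if "a \<in> insert x F" "Q x a" for a
    proof (cases "a = x")
      case False
      with that have "a \<in> F" by simp
      with that m True insert.prems have "a = m" by blast
      with that m True insert.prems show ?thesis by blast
    qed
    then show ?thesis by blast
  next
    case False
    then show ?thesis using m by blast
  qed
qed

lemma finite_has_greatest_wrt:
  assumes "finite X" "X \<noteq> {}"
    and "\<And>a b. a \<in> X \<Longrightarrow> b \<in> X \<Longrightarrow> Q a b \<Longrightarrow> Q b a \<Longrightarrow> a = b"
    and "\<And>a b c. a \<in> X \<Longrightarrow> b \<in> X \<Longrightarrow> c \<in> X \<Longrightarrow> Q a b \<Longrightarrow> Q b c \<Longrightarrow> Q a c"
    and total: "\<And>a b. a \<in> X \<Longrightarrow> b \<in> X \<Longrightarrow> Q a b \<or> Q b a"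
  shows "\<exists>m\<in>X. \<forall>a\<in>X. Q a m"
proof -
  obtain m where "m \<in> X" "\<forall>a\<in>X. Q m a \<longrightarrow> a = m"
    using finite_has_maximal_wrt[of X Q] assms(1-4) by blast
  then show ?thesis using total by blast
qed

definition last_leaf :: "'a set \<Rightarrow> ('a \<Rightarrow> 'a \<Rightarrow> bool) \<Rightarrow> ('a \<Rightarrow> 'a \<Rightarrow> bool) \<Rightarrow> 'a \<Rightarrow> bool" where
  "last_leaf A P R x \<longleftrightarrow> is_leaf A P x \<and> (\<forall>x'. is_leaf A P x' \<longrightarrow> lex_le A P R x' x)"

definition next_leaf :: "'a set \<Rightarrow> ('a \<Rightarrow> 'a \<Rightarrow> bool) \<Rightarrow> ('a \<Rightarrow> 'a \<Rightarrow> bool) \<Rightarrow> 'a \<Rightarrow> 'a" where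
  "next_leaf A P R x = (THE x'. is_leaf A P x' \<and> lex_less A P R x x' \<and>
     (\<forall>x''. is_leaf A P x'' \<and> lex_less A P R x x'' \<longrightarrow> lex_le A P R x' x''))"

definition left_branch_leaves ::
  "'a set \<Rightarrow> ('a \<Rightarrow> 'a \<Rightarrow> bool) \<Rightarrow> ('a \<Rightarrow> 'a \<Rightarrow> bool) \<Rightarrow> 'a \<Rightarrow> 'a \<Rightarrow> 'a set" where
  "left_branch_leaves A P R a b =
     {y. is_leaf A P y \<and> lex_less A P R y a \<and> tree_meet A P b a = tree_meet A P y a}"

lemma conjugate_last_leaf_iff:
  "last_leaf A P R x \<Longrightarrow> conjugate A P R B Q R' i x y \<longleftrightarrow> last_leaf B Q R' y"
  unfolding conjugate_def last_leaf_def by simp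

lemma conjugate_not_last_leaf_iff:
  fixes A :: "'a set" and P R :: "'a \<Rightarrow> 'a \<Rightarrow> bool"
    and B :: "'b set" and Q R' :: "'b \<Rightarrow> 'b \<Rightarrow> bool" and i :: "'a \<Rightarrow> 'b"
  assumes "is_leaf A P x" "\<not> last_leaf A P R x"
  defines "L \<equiv> left_branch_leaves B Q R' (i (next_leaf A P R x)) (i x)"
  shows "conjugate A P R B Q R' i x y \<longleftrightarrow> y \<in> L \<and> (\<forall>y'\<in>L. lex_le B Q R' y' y)"
  using assms unfolding conjugate_def last_leaf_def L_def left_branch_leaves_def
    next_leaf_def[symmetric] Let_def by auto

locale ordered_tree =
  fixes A :: "'a set" and P R :: "'a \<Rightarrow> 'a \<Rightarrow> bool"
  assumes ordered_tree: "is_ordered_tree A P R"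
begin

abbreviation "meet \<equiv> tree_meet A P"
abbreviation "children \<equiv> tree_children A P"
abbreviation "child \<equiv> child_toward A P"
abbreviation "leaf \<equiv> is_leaf A P"
abbreviation "lle \<equiv> lex_le A P R"
abbreviation "lless \<equiv> lex_less A P R"

lemma tree: "is_tree A P"
  using ordered_tree by (simp add: is_ordered_tree_def)

lemma finite_carrier: "finite A"
  using tree by (simp add: is_tree_def)

lemma pred_refl: "v \<in> A \<Longrightarrow> P v v"
  using tree by (simp add: is_tree_def)

lemma pred_antisym: "v \<in> A \<Longrightarrow> w \<in> A \<Longrightarrow> P v w \<Longrightarrow> P w v \<Longrightarrow> v = w"
  using tree unfolding is_tree_def by blast

lemma pred_trans: "u \<in> A \<Longrightarrow> v \<in> A \<Longrightarrow> w \<in> A \<Longrightarrow> P u v \<Longrightarrow> P v w \<Longrightarrow> P u w"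
  using tree unfolding is_tree_def by blast

lemma root_exists: "\<exists>r\<in>A. \<forall>v\<in>A. P r v"
  using tree unfolding is_tree_def by blast

lemma preds_chain:
  "v \<in> A \<Longrightarrow> u \<in> A \<Longrightarrow> u' \<in> A \<Longrightarrow> P u v \<Longrightarrow> P u' v \<Longrightarrow> P u u' \<or> P u' u"
  using tree unfolding is_tree_def by blast

lemma sibling_antisym:
  "m \<in> A \<Longrightarrow> u \<in> children m \<Longrightarrow> v \<in> children m \<Longrightarrow> R u v \<Longrightarrow> R v u \<Longrightarrow> u = v"
  using ordered_tree unfolding is_ordered_tree_def Let_def by blast

lemma sibling_trans:
  "m \<in> A \<Longrightarrow> u \<in> children m \<Longrightarrow> v \<in> children m \<Longrightarrow> w \<in> children m \<Longrightarrow>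
    R u v \<Longrightarrow> R v w \<Longrightarrow> R u w"
  using ordered_tree unfolding is_ordered_tree_def Let_def by blast

lemma sibling_total: "m \<in> A \<Longrightarrow> u \<in> children m \<Longrightarrow> v \<in> children m \<Longrightarrow> R u v \<or> R v u"
  using ordered_tree unfolding is_ordered_tree_def Let_def by blast

lemma childrenD: "c \<in> children m \<Longrightarrow> c \<in> A \<and> P m c \<and> c \<noteq> m"
  unfolding tree_children_def by blast

lemma children_cover:
  "c \<in> children m \<Longrightarrow> x \<in> A \<Longrightarrow> P m x \<Longrightarrow> P x c \<Longrightarrow> x = m \<or> x = c"
  unfolding tree_children_def by blast

lemma leaf_in: "leaf u \<Longrightarrow> u \<in> A"
  unfolding is_leaf_def by blast

lemma leaf_pred_eq: "leaf u \<Longrightarrow> v \<in> A \<Longrightarrow> P u v \<Longrightarrow> v = u"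
  unfolding is_leaf_def by blast

lemma meet_eqI:
  assumes "v \<in> A" "w \<in> A" "m \<in> A" "P m v" "P m w"
    and "\<And>u. u \<in> A \<Longrightarrow> P u v \<Longrightarrow> P u w \<Longrightarrow> P u m"
  shows "meet v w = m"
  unfolding tree_meet_def
proof (rule the_equality)
  show "m \<in> A \<and> P m v \<and> P m w \<and> (\<forall>u\<in>A. P u v \<and> P u w \<longrightarrow> P u m)"
    using assms by blast
next
  fix m' assume "m' \<in> A \<and> P m' v \<and> P m' w \<and> (\<forall>u\<in>A. P u v \<and> P u w \<longrightarrow> P u m')"
  then show "m' = m" using assms pred_antisym by blast
qed

lemma chain_has_greatest:
  assumes "X \<subseteq> A" "X \<noteq> {}" "\<And>a b. a \<in> X \<Longrightarrow> b \<in> X \<Longrightarrow> P a b \<or> P b a"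
  shows "\<exists>m\<in>X. \<forall>a\<in>X. P a m"
proof (rule finite_has_greatest_wrt)
  show "finite X" using assms(1) finite_carrier finite_subset by blast
qed (use assms pred_antisym pred_trans in blast)+

lemma chain_has_least:
  assumes "X \<subseteq> A" "X \<noteq> {}" "\<And>a b. a \<in> X \<Longrightarrow> b \<in> X \<Longrightarrow> P a b \<or> P b a"
  shows "\<exists>m\<in>X. \<forall>a\<in>X. P m a"
proof (rule finite_has_greatest_wrt[where Q = "\<lambda>a b. P b a"])
  show "finite X" using assms(1) finite_carrier finite_subset by blast
qed (use assms pred_antisym pred_trans in blast)+

lemma meet:
  assumes "v \<in> A" "w \<in> A"
  shows "meet v w \<in> A" "P (meet v w) v" "P (meet v w) w"
    and "\<And>u. u \<in> A \<Longrightarrow> P u v \<Longrightarrow> P u w \<Longrightarrow> P u (meet v w)"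
proof -
  let ?X = "{u \<in> A. P u v \<and> P u w}"
  have "\<exists>m\<in>?X. \<forall>u\<in>?X. P u m"
    using root_exists assms preds_chain[OF assms(1)] by (intro chain_has_greatest) auto
  then obtain m where m: "m \<in> ?X" "\<forall>u\<in>?X. P u m" ..
  then have "meet v w = m" by (intro meet_eqI) (use assms in auto)
  then show "meet v w \<in> A" "P (meet v w) v" "P (meet v w) w"
    "\<And>u. u \<in> A \<Longrightarrow> P u v \<Longrightarrow> P u w \<Longrightarrow> P u (meet v w)"
    using m by auto
qed

lemma meet_commute: "v \<in> A \<Longrightarrow> w \<in> A \<Longrightarrow> meet v w = meet w v"
  by (rule meet_eqI) (auto intro: meet)

lemma meet_eq_left: "v \<in> A \<Longrightarrow> w \<in> A \<Longrightarrow> P v w \<Longrightarrow> meet v w = v"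
  by (rule meet_eqI) (auto intro: pred_refl)

lemma meet_eq_right: "v \<in> A \<Longrightarrow> w \<in> A \<Longrightarrow> P w v \<Longrightarrow> meet v w = w"
  by (rule meet_eqI) (auto intro: pred_refl)

lemma child_exists:
  assumes "m \<in> A" "v \<in> A" "P m v" "m \<noteq> v"
  shows "\<exists>c\<in>children m. P c v"
proof -
  let ?X = "{u \<in> A. P m u \<and> u \<noteq> m \<and> P u v}"
  have "\<exists>c\<in>?X. \<forall>u\<in>?X. P c u"
    using assms pred_refl preds_chain[OF assms(2)] by (intro chain_has_least) auto
  then obtain c where c: "c \<in> ?X" "\<forall>u\<in>?X. P c u" ..
  have "c \<in> children m"
    unfolding tree_children_def
  proof (intro CollectI conjI ballI impI)
    show "c \<in> A" "P m c" "c \<noteq> m" using c by auto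
    fix x assume x: "x \<in> A" "P m x \<and> P x c"
    show "x = m \<or> x = c"
    proof (cases "x = m")
      case False
      then have "x \<in> ?X" using x c pred_trans[of x c v] assms by auto
      then show ?thesis using c x pred_antisym by blast
    qed simp
  qed
  then show ?thesis using c by blast
qed

lemma child_unique:
  "c \<in> children m \<Longrightarrow> c' \<in> children m \<Longrightarrow> v \<in> A \<Longrightarrow> P c v \<Longrightarrow> P c' v \<Longrightarrow> c = c'"
  using preds_chain[of v c c'] childrenD[of c m] childrenD[of c' m]
    children_cover[of c m c'] children_cover[of c' m c] by blast

lemma child_eqI: "c \<in> children m \<Longrightarrow> v \<in> A \<Longrightarrow> P c v \<Longrightarrow> child m v = c"
  unfolding child_toward_def using child_unique by blast

lemma child:
  assumes "m \<in> A" "v \<in> A" "P m v" "m \<noteq> v"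
  shows "child m v \<in> children m" "P (child m v) v"
proof -
  obtain c where "c \<in> children m" "P c v" using child_exists[OF assms] by blast
  then show "child m v \<in> children m" "P (child m v) v" using child_eqI[of c m v] assms by auto
qed

lemma child_descendant:
  assumes "m \<in> A" "v \<in> A" "v' \<in> A" "P m v" "m \<noteq> v" "P v v'"
  shows "child m v' = child m v"
  using child[OF assms(1,2,4,5)] childrenD pred_trans[of _ v v'] assms
  by (blast intro: child_eqI)

lemma diverging_children:
  assumes "m \<in> A" "u \<in> A" "w \<in> A" "P m u" "P m w" "m \<noteq> u" "m \<noteq> w"
    and "child m u \<noteq> child m w"
  shows "meet u w = m" "\<not> P u w" "\<not> P w u" "lle u w \<longleftrightarrow> R (child m u) (child m w)"
proof -
  show uw: "\<not> P u w" "\<not> P w u" using child_descendant[of m u w] child_descendant[of m w u] assms by auto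
  have "P m (meet u w)" "meet u w \<in> A" "P (meet u w) u" "P (meet u w) w"
    using meet assms by auto
  then show "meet u w = m"
    using child_descendant[of m "meet u w" u] child_descendant[of m "meet u w" w] assms by metis
  with uw show "lle u w \<longleftrightarrow> R (child m u) (child m w)" unfolding lex_le_def by simp
qed

lemma incomparable_meet:
  assumes "u \<in> A" "w \<in> A" "\<not> P u w" "\<not> P w u"
  defines "m \<equiv> meet u w"
  shows "m \<in> A" "P m u" "m \<noteq> u" "P m w" "m \<noteq> w" "child m u \<noteq> child m w"
proof -
  show m: "m \<in> A" "P m u" "P m w" using meet assms by auto
  show "m \<noteq> u" "m \<noteq> w" using m assms by auto
  show "child m u \<noteq> child m w"
  proof
    assume eq: "child m u = child m w"
    have c: "child m u \<in> children m" "P (child m u) u" "P (child m w) w"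
      using child m assms \<open>m \<noteq> u\<close> \<open>m \<noteq> w\<close> by auto
    then have "P (child m u) m" using meet(4)[OF assms(1,2)] eq childrenD m_def by auto
    with c(1) show False using childrenD pred_antisym m by blast
  qed
qed

lemma lle_incomparable:
  "\<not> P u w \<Longrightarrow> \<not> P w u \<Longrightarrow> lle u w \<longleftrightarrow> R (child (meet u w) u) (child (meet u w) w)"
  unfolding lex_le_def by simp

lemma lle_refl: "v \<in> A \<Longrightarrow> lle v v"
  unfolding lex_le_def using pred_refl by simp

lemma lle_antisym:
  assumes "u \<in> A" "w \<in> A" "lle u w" "lle w u"
  shows "u = w"
proof (cases "P u w \<or> P w u")
  case True
  then show ?thesis using assms pred_antisym unfolding lex_le_def by blast
next
  case False
  let ?m = "meet u w"
  have m: "?m \<in> A" "child ?m u \<in> children ?m" "child ?m w \<in> children ?m" "child ?m u \<noteq> child ?m w"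
    using incomparable_meet[of u w] child[of ?m] assms False by auto
  have "R (child ?m u) (child ?m w)" "R (child ?m w) (child ?m u)"
    using assms False lle_incomparable meet_commute by auto
  then show ?thesis using sibling_antisym m by blast
qed

lemma lle_total:
  assumes "u \<in> A" "w \<in> A"
  shows "lle u w \<or> lle w u"
proof (cases "P u w \<or> P w u")
  case True
  then show ?thesis unfolding lex_le_def by blast
next
  case False
  let ?m = "meet u w"
  have m: "?m \<in> A" "child ?m u \<in> children ?m" "child ?m w \<in> children ?m"
    using incomparable_meet[of u w] child[of ?m] assms False by auto
  then have "R (child ?m u) (child ?m w) \<or> R (child ?m w) (child ?m u)"
    using sibling_total by blast
  then show ?thesis using lle_incomparable False meet_commute assms by auto
qed

lemma lle_descendant:
  assumes "w \<in> A" "v \<in> A" "v' \<in> A" "\<not> P w v" "\<not> P v w" "P v v'"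
  shows "lle w v' \<longleftrightarrow> lle w v" "lle v' w \<longleftrightarrow> lle v w"
proof -
  let ?m = "meet w v"
  have m: "?m \<in> A" "P ?m w" "?m \<noteq> w" "P ?m v" "?m \<noteq> v" "child ?m w \<noteq> child ?m v"
    using incomparable_meet[of w v] assms by auto
  have "P ?m v'" "?m \<noteq> v'" using pred_trans[of ?m v v'] pred_antisym[of v ?m] m assms by auto
  moreover have "child ?m v' = child ?m v" using child_descendant[of ?m v v'] m assms by auto
  ultimately show "lle w v' \<longleftrightarrow> lle w v" "lle v' w \<longleftrightarrow> lle v w"
    using diverging_children(4)[of ?m] m assms by metis+
qed

lemma lle_between_descendants:
  assumes "d \<in> A" "u \<in> A" "v \<in> A" "w \<in> A" "P d u" "P d v" "lle u w" "lle w v"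
  shows "P d w"
proof (cases "P w d")
  case True
  then have "lle w u" using pred_trans[of w d u] assms unfolding lex_le_def by blast
  then show ?thesis using lle_antisym[of u w] assms by auto
next
  case False
  show ?thesis
  proof (rule ccontr)
    assume "\<not> P d w"
    then have "lle d w" "lle w d"
      using lle_descendant[of w d u] lle_descendant[of w d v] False assms by auto
    then show False using lle_antisym[of d w] False pred_refl assms by auto
  qed
qed

lemma lle_trans_incomparable:
  assumes "u \<in> A" "v \<in> A" "w \<in> A"
    and incomparable: "\<not> P u v" "\<not> P v u" "\<not> P v w" "\<not> P w v" "\<not> P u w" "\<not> P w u"
    and "lle u v" "lle v w"
  shows "lle u w"
proof -
  let ?a = "meet u v" and ?b = "meet v w"
  have a: "P ?a u" "?a \<noteq> u" "P ?a v" "?a \<noteq> v" "child ?a u \<noteq> child ?a v" "?a \<in> A"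
    using incomparable_meet[of u v] assms by auto
  have b: "P ?b v" "?b \<noteq> v" "P ?b w" "?b \<noteq> w" "child ?b v \<noteq> child ?b w" "?b \<in> A"
    using incomparable_meet[of v w] assms by auto
  have ra: "R (child ?a u) (child ?a v)" and rb: "R (child ?b v) (child ?b w)"
    using assms lle_incomparable by auto
  consider "?a = ?b" | "P ?a ?b" "?a \<noteq> ?b" | "P ?b ?a" "?a \<noteq> ?b"
    using preds_chain[of v ?a ?b] a b assms by auto
  then show ?thesis
  proof cases
    case 1
    have k: "child ?a u \<in> children ?a" "child ?a v \<in> children ?a" "child ?a w \<in> children ?a"
      using child a b assms 1 by auto
    have "R (child ?a u) (child ?a w)" using sibling_trans[OF a(6) k] ra rb 1 by simp
    moreover have "child ?a u \<noteq> child ?a w"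
      using sibling_antisym[OF a(6) k(1,2)] ra rb 1 a(5) by auto
    ultimately show ?thesis using diverging_children(4)[of ?a u w] a b 1 assms by auto
  next
    case 2
    then have "child ?a v = child ?a ?b" "child ?a w = child ?a ?b" "P ?a w"
      using child_descendant[of ?a ?b v] child_descendant[of ?a ?b w] pred_trans[of ?a ?b w] a b assms
      by auto
    then show ?thesis using diverging_children(4)[of ?a u w] a assms ra by auto
  next
    case 3
    then have "child ?b v = child ?b ?a" "child ?b u = child ?b ?a" "P ?b u"
      using child_descendant[of ?b ?a v] child_descendant[of ?b ?a u] pred_trans[of ?b ?a u] a b assms
      by auto
    then show ?thesis using diverging_children(4)[of ?b u w] b assms rb by auto
  qed
qed

lemma lle_trans_leaves:
  assumes "leaf u" "leaf v" "leaf w" "lle u v" "lle v w"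
  shows "lle u w"
proof (cases "u = v \<or> v = w \<or> u = w")
  case True
  then show ?thesis using assms lle_refl leaf_in by auto
next
  case False
  then show ?thesis
    using lle_trans_incomparable[of u v w] leaf_pred_eq[OF assms(1)] leaf_pred_eq[OF assms(2)]
      leaf_pred_eq[OF assms(3)] leaf_in assms by metis
qed

lemma leaf_below:
  assumes "v \<in> A"
  shows "\<exists>l. leaf l \<and> P v l"
proof -
  let ?X = "{w \<in> A. P v w}"
  have "\<exists>l\<in>?X. \<forall>w\<in>?X. P l w \<longrightarrow> w = l"
  proof (rule finite_has_maximal_wrt)
    show "finite ?X" using finite_carrier by simp
  qed (use assms pred_refl pred_antisym pred_trans in blast)+
  then obtain l where "l \<in> ?X" "\<forall>w\<in>?X. P l w \<longrightarrow> w = l" ..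
  then have "leaf l \<and> P v l" unfolding is_leaf_def using pred_trans[of v l] assms by blast
  then show ?thesis ..
qed

lemma next_leaf:
  assumes "leaf x" "\<not> last_leaf A P R x"
  defines "s \<equiv> next_leaf A P R x"
  shows "leaf s" "lless x s" "\<And>x'. leaf x' \<Longrightarrow> lless x x' \<Longrightarrow> lle s x'"
proof -
  let ?X = "{w. leaf w \<and> lless x w}"
  obtain l where l: "leaf l" "\<not> lle l x" using assms unfolding last_leaf_def by blast
  then have "l \<in> ?X" using lle_total lle_refl leaf_in assms unfolding lex_less_def by blast
  moreover have "finite ?X" using finite_carrier by (rule rev_finite_subset) (auto simp: leaf_in)
  ultimately have "\<exists>m\<in>?X. \<forall>w\<in>?X. lle m w"
    by (intro finite_has_greatest_wrt[where Q = "\<lambda>a b. lle b a"])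
      (use lle_antisym lle_trans_leaves lle_total leaf_in in blast)+
  then obtain m where m: "m \<in> ?X" "\<forall>w\<in>?X. lle m w" ..
  have "s = m"
    unfolding s_def next_leaf_def
    by (rule the_equality) (use m lle_antisym leaf_in in blast)+
  then show "leaf s" "lless x s" "\<And>x'. leaf x' \<Longrightarrow> lless x x' \<Longrightarrow> lle s x'"
    using m by auto
qed

lemma lless_meet_same_child:
  assumes "m \<in> A" "a \<in> A" "a' \<in> A" "w \<in> A" "P m a" "m \<noteq> a" "P m a'" "m \<noteq> a'"
    and "child m a = child m a'" "lless w a" "meet w a = m"
  shows "lless w a' \<and> meet w a' = m"
proof (cases "w = m")
  case True
  then show ?thesis using assms meet_eq_left unfolding lex_less_def lex_le_def by auto
next
  case False
  have "P m w" using meet(2)[of w a] assms by auto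
  have "\<not> P w a" "\<not> P a w" using meet_eq_left[of w a] meet_eq_right[of w a] assms False by auto
  then have "child m w \<noteq> child m a" "R (child m w) (child m a)"
    using incomparable_meet(6)[of w a] assms lle_incomparable unfolding lex_less_def by auto
  then show ?thesis
    using diverging_children[of m w a'] \<open>P m w\<close> assms False unfolding lex_less_def by auto
qed

lemma left_branch_leaves_cong:
  assumes "m \<in> A" "a \<in> A" "a' \<in> A" "P m a" "m \<noteq> a" "P m a'" "m \<noteq> a'"
    and "child m a = child m a'" "meet b a = m" "meet b' a' = m"
  shows "left_branch_leaves A P R a b = left_branch_leaves A P R a' b'"
  using lless_meet_same_child[of m a a'] lless_meet_same_child[of m a' a] leaf_in assms
  unfolding left_branch_leaves_def by metis

lemma leaf_lless_incomparable: "leaf y \<Longrightarrow> a \<in> A \<Longrightarrow> lless y a \<Longrightarrow> \<not> P y a \<and> \<not> P a y"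
  using leaf_pred_eq unfolding lex_less_def lex_le_def by blast

lemma next_leaf_after_last_left_branch_leaf:
  assumes "a \<in> A" "y \<in> left_branch_leaves A P R a b"
    and greatest: "\<forall>y'\<in>left_branch_leaves A P R a b. lle y' y"
  defines "m \<equiv> meet y a" and "s \<equiv> next_leaf A P R y"
  shows "\<not> last_leaf A P R y" "P (child m a) s" "meet y s = m"
proof -
  let ?c = "child m a"
  have y: "leaf y" "y \<in> A" "lless y a" and mba: "meet b a = m"
    using assms leaf_in unfolding left_branch_leaves_def by auto
  have ya: "\<not> P y a" "\<not> P a y" using leaf_lless_incomparable y assms by blast+
  have m: "m \<in> A" "P m y" "m \<noteq> y" "P m a" "m \<noteq> a" "child m y \<noteq> ?c"
    using incomparable_meet[of y a] ya y assms unfolding m_def by auto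
  have c: "?c \<in> children m" "P ?c a" using child m assms by auto
  have "R (child m y) ?c" using y ya lle_incomparable unfolding lex_less_def m_def by auto
  obtain l where l: "leaf l" "P a l" using leaf_below assms by blast
  have lm: "l \<in> A" "P m l" "m \<noteq> l" "child m l = ?c"
    using l leaf_in pred_trans[of m a l] pred_antisym[of m a] child_descendant[of m a l] m assms
    by auto
  have "lle y l" "y \<noteq> l"
    using diverging_children[of m y l] \<open>R (child m y) ?c\<close> lm m y by auto
  then show not_last: "\<not> last_leaf A P R y"
    using lle_antisym l lm y unfolding last_leaf_def by blast
  have s: "leaf s" "s \<in> A" "lless y s" "lle s l"
    using next_leaf[OF y(1) not_last] \<open>lle y l\<close> \<open>y \<noteq> l\<close> l leaf_in
    unfolding s_def lex_less_def by auto
  txt \<open>s lies between y and l, so below m; its child at m can neither precede c (then s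
    would be a left-branch leaf after y) nor follow c (then s would come after l).\<close>
  have "P m s" using lle_between_descendants[of m y l s] m y lm s unfolding lex_less_def by auto
  moreover have "m \<noteq> s" using leaf_pred_eq[of s a] s m assms by auto
  ultimately have c': "child m s \<in> children m" using child m s by auto
  show "P ?c s"
  proof (cases "child m s = ?c")
    case True
    then show ?thesis using child \<open>P m s\<close> \<open>m \<noteq> s\<close> m s by metis
  next
    case False
    then consider "R (child m s) ?c" | "R ?c (child m s)" using sibling_total c c' m by blast
    then show ?thesis
    proof cases
      case 1
      then have "s \<in> left_branch_leaves A P R a b"
        using diverging_children[of m s a] False \<open>P m s\<close> \<open>m \<noteq> s\<close> m s mba assms
        unfolding left_branch_leaves_def lex_less_def by auto
      then show ?thesis using greatest lle_antisym s y unfolding lex_less_def by blast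
    next
      case 2
      then have "lle l s" using diverging_children[of m l s] False \<open>P m s\<close> \<open>m \<noteq> s\<close> m s lm by auto
      then show ?thesis using lle_antisym s lm False by auto
    qed
  qed
  then show "meet y s = m"
    using diverging_children(1)[of m y s] child_eqI[OF c(1)] \<open>P m s\<close> \<open>m \<noteq> s\<close> m s y by auto
qed

end

locale ordered_tree_embedding =
  src: ordered_tree A P R + tgt: ordered_tree B Q R'
  for A :: "'a set" and P R and B :: "'b set" and Q R' +
  fixes f :: "'a \<Rightarrow> 'b"
  assumes embedding: "otree_embedding A P R B Q R' f"
begin

lemma maps_into: "u \<in> A \<Longrightarrow> f u \<in> B"
  using embedding unfolding otree_embedding_def otree_morphism_def by blast

lemma preserves_meet: "u \<in> A \<Longrightarrow> w \<in> A \<Longrightarrow> f (src.meet u w) = tgt.meet (f u) (f w)"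
  using embedding unfolding otree_embedding_def otree_morphism_def by blast

lemma inj: "u \<in> A \<Longrightarrow> w \<in> A \<Longrightarrow> u \<noteq> w \<Longrightarrow> f u \<noteq> f w"
  using embedding unfolding otree_embedding_def inj_on_def by blast

lemma mono: "u \<in> A \<Longrightarrow> w \<in> A \<Longrightarrow> P u w \<Longrightarrow> Q (f u) (f w)"
  using preserves_meet[of u w] src.meet_eq_left tgt.meet(3) maps_into by metis

lemma image_left_branch_leaves_next_leaf:
  assumes "a \<in> A" "b \<in> A" "y \<in> left_branch_leaves A P R a b"
    and "\<forall>y'\<in>left_branch_leaves A P R a b. src.lle y' y"
  defines "s \<equiv> next_leaf A P R y"
  shows "\<not> last_leaf A P R y"
    "left_branch_leaves B Q R' (f s) (f y) = left_branch_leaves B Q R' (f a) (f b)"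
proof -
  let ?m = "src.meet y a"
  let ?c = "src.child ?m a"
  have key: "\<not> last_leaf A P R y" "P ?c s" "src.meet y s = ?m"
    using src.next_leaf_after_last_left_branch_leaf[OF assms(1,3,4)] unfolding s_def by auto
  then show "\<not> last_leaf A P R y" by blast
  have y: "src.leaf y" "y \<in> A" "src.lless y a" "src.meet b a = ?m"
    using assms src.leaf_in unfolding left_branch_leaves_def by auto
  have s: "s \<in> A" using src.next_leaf(1)[OF y(1) key(1)] src.leaf_in unfolding s_def by blast
  have m: "?m \<in> A" "P ?m a" "?m \<noteq> a" and c: "?c \<in> src.children ?m" "P ?c a"
    using src.incomparable_meet[of y a] src.leaf_lless_incomparable src.child y assms by auto
  have fc: "Q (f ?m) (f ?c)" "f ?m \<noteq> f ?c" "Q (f ?c) (f s)" "Q (f ?c) (f a)"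
    using mono inj src.childrenD[OF c(1)] m c key s assms by auto
  then have fm: "Q (f ?m) (f s)" "f ?m \<noteq> f s" "Q (f ?m) (f a)" "f ?m \<noteq> f a"
    using tgt.pred_trans tgt.pred_antisym maps_into src.childrenD[OF c(1)] m s assms by metis+
  have "tgt.child (f ?m) (f s) = tgt.child (f ?m) (f a)"
    using tgt.child_descendant[of "f ?m" "f ?c"] fc maps_into src.childrenD[OF c(1)] m s assms by metis
  moreover have "tgt.meet (f y) (f s) = f ?m" "tgt.meet (f b) (f a) = f ?m"
    using preserves_meet[of y s] preserves_meet[of b a] key(3) y(2,4) s assms(1,2) by simp_all
  ultimately show "left_branch_leaves B Q R' (f s) (f y) = left_branch_leaves B Q R' (f a) (f b)"
    using tgt.left_branch_leaves_cong[of "f ?m" "f s" "f a"] fm maps_into m s assms by auto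
qed

end

theorem lemma4p13:
  fixes S :: "'a set" and PS RS :: "'a \<Rightarrow> 'a \<Rightarrow> bool"
    and T :: "'b set" and PT RT :: "'b \<Rightarrow> 'b \<Rightarrow> bool"
    and V :: "'c set" and PV RV :: "'c \<Rightarrow> 'c \<Rightarrow> bool"
    and i :: "'a \<Rightarrow> 'b" and j :: "'b \<Rightarrow> 'c"
  assumes "is_ordered_tree S PS RS" and "is_ordered_tree T PT RT" and "is_ordered_tree V PV RV"
    and "otree_embedding S PS RS T PT RT i" and "otree_embedding T PT RT V PV RV j"
    and "is_leaf S PS x" and "is_leaf T PT y" and "is_leaf V PV z"
    and "conjugate S PS RS T PT RT i x y" and "conjugate T PT RT V PV RV j y z"
  shows "conjugate S PS RS V PV RV (j \<circ> i) x z"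
proof -
  interpret i: ordered_tree_embedding S PS RS T PT RT i
    using assms(1,2,4) by unfold_locales
  interpret j: ordered_tree_embedding T PT RT V PV RV j
    using assms(2,3,5) by unfold_locales
  show ?thesis
  proof (cases "last_leaf S PS RS x")
    case True
    then show ?thesis using assms(9,10) conjugate_last_leaf_iff by metis
  next
    case False
    let ?a = "i (next_leaf S PS RS x)" and ?b = "i x"
    let ?L = "left_branch_leaves T PT RT ?a ?b"
    have ab: "?a \<in> T" "?b \<in> T"
      using i.src.next_leaf(1)[OF assms(6) False] i.src.leaf_in assms(6) i.maps_into by auto
    have y: "y \<in> ?L" "\<forall>y'\<in>?L. lex_le T PT RT y' y"
      using assms(6,9) False conjugate_not_last_leaf_iff by metis+
    note image = j.image_left_branch_leaves_next_leaf[OF ab y]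
    have "conjugate T PT RT V PV RV j y z \<longleftrightarrow> conjugate S PS RS V PV RV (j \<circ> i) x z"
      using conjugate_not_last_leaf_iff[OF assms(7) image(1), where B = V and Q = PV and R' = RV and i = j]
        conjugate_not_last_leaf_iff[OF assms(6) False, where B = V and Q = PV and R' = RV and i = "j \<circ> i"]
      unfolding image(2) by simp
    then show ?thesis using assms(10) by blast
  qed
qed

end
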